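(* Let $1\le k\le d$, $\gamma=(\gamma_1,\dots,\gamma_{d+1-k})\in\mathbb R^{d+1-k}$, and $\mathbf n\in\mathbb N_0^d$ with $n_{d-k+2}\ge1,\dots,n_d\ge1$. Write $\tilde\gamma=(\gamma,-\mathbf 1_{k})=(\tilde\gamma_1,\dots,\tilde\gamma_{d+1})$. Then $$P_{\mathbf n}^{(\gamma,-\mathbf 1_k)}(x)=x_{d+2-k}\cdots x_d(1-|x|)\sum_{i=1}^d\lambda_{n_i,\tilde\gamma_i}P^{(\gamma,\mathbf 1_k)}_{\mathbf n-e_i-(\mathbf 0,\mathbf 1_{k-1})}(x),\qquad \lambda_{n_i,\tilde\gamma_i}=(-1)^{k-1}\frac{n_i(n_i+\tilde\gamma_i)}{|\mathbf n|}\prod_{j=0}^{k-2}(|\mathbf n|-j),$$ where any term whose index has a negative entry has coefficient $0$ and is read as $0$.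
   Context: $|x|=x_1+\dots+x_d$, $|\mathbf n|=n_1+\dots+n_d$, $e_i$ standard basis vectors of $\mathbb R^d$; $(\mathbf 0,\mathbf 1_{k-1})\in\mathbb N_0^d$ has ones exactly in the last $k-1$ entries; $(\gamma,\pm\mathbf 1_k)\in\mathbb R^{d+1}$ is $\gamma$ followed by $k$ entries $\pm1$. For $\boldsymbol\gamma\in\mathbb R^{d+1}$ and $\mathbf m\in\mathbb N_0^d$, $P_{\mathbf m}^{\boldsymbol\gamma}(x)=\prod_{i\le d}x_i^{-\gamma_i}(1-|x|)^{-\gamma_{d+1}}\partial_1^{m_1}\cdots\partial_d^{m_d}\big[\prod_{i\le d}x_i^{\gamma_i+m_i}(1-|x|)^{\gamma_{d+1}+|\mathbf m|}\big]$ on the interior of $T^d$. For $k=1$ the product $x_{d+2-k}\cdots x_d$ is empty (equal to $1$). *)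

theory Defs
  imports "HOL-Analysis.Analysis"
begin

text \<open>Points of R^d are functions nat => real, coordinates x 1, ..., x d (1-based);
  multi-indices are functions nat => nat with entries n 1, ..., n d;
  parameter vectors in R^(d+1) are functions nat => real with entries 1..d+1.\<close>

definition abs_pt :: "nat \<Rightarrow> (nat \<Rightarrow> real) \<Rightarrow> real" where
  "abs_pt d x = (\<Sum>i=1..d. x i)"

definition abs_idx :: "nat \<Rightarrow> (nat \<Rightarrow> nat) \<Rightarrow> nat" where
  "abs_idx d n = (\<Sum>i=1..d. n i)"

definition simplex_interior :: "nat \<Rightarrow> (nat \<Rightarrow> real) set" where
  "simplex_interior d = {x. (\<forall>i\<in>{1..d}. 0 < x i) \<and> abs_pt d x < 1}"

definition partial :: "nat \<Rightarrow> ((nat \<Rightarrow> real) \<Rightarrow> real) \<Rightarrow> (nat \<Rightarrow> real) \<Rightarrow> real" where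
  "partial i f x = deriv (\<lambda>t. f (x(i := t))) (x i)"

definition mpartial :: "nat \<Rightarrow> (nat \<Rightarrow> nat) \<Rightarrow> ((nat \<Rightarrow> real) \<Rightarrow> real) \<Rightarrow> (nat \<Rightarrow> real) \<Rightarrow> real" where
  "mpartial d m f = foldr (\<lambda>i g. (partial i ^^ m i) g) [1..<d+1] f"

definition P :: "nat \<Rightarrow> (nat \<Rightarrow> real) \<Rightarrow> (nat \<Rightarrow> nat) \<Rightarrow> (nat \<Rightarrow> real) \<Rightarrow> real" where
  "P d \<gamma> m x =
     (\<Prod>i=1..d. x i powr (- \<gamma> i)) * (1 - abs_pt d x) powr (- \<gamma> (d+1)) *
     mpartial d m
       (\<lambda>y. (\<Prod>i=1..d. y i powr (\<gamma> i + real (m i))) *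
            (1 - abs_pt d y) powr (\<gamma> (d+1) + real (abs_idx d m))) x"

definition ext_param :: "nat \<Rightarrow> nat \<Rightarrow> (nat \<Rightarrow> real) \<Rightarrow> real \<Rightarrow> (nat \<Rightarrow> real)" where
  "ext_param d k \<gamma> c = (\<lambda>j. if j \<le> d + 1 - k then \<gamma> j else c)"

text \<open>Entries (as integers) of n - e_i - (0, 1_{k-1}).\<close>
definition shifted_idx :: "nat \<Rightarrow> nat \<Rightarrow> (nat \<Rightarrow> nat) \<Rightarrow> nat \<Rightarrow> nat \<Rightarrow> int" where
  "shifted_idx d k n i j = int (n j) - (if j = i then 1 else 0) - (if d + 2 - k \<le> j then 1 else 0)"

definition lam :: "nat \<Rightarrow> nat \<Rightarrow> (nat \<Rightarrow> nat) \<Rightarrow> nat \<Rightarrow> real \<Rightarrow> real" where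
  "lam d k n ni g = (-1) ^ (k - 1) * (real ni * (real ni + g)) / real (abs_idx d n) *
      (\<Prod>j\<in>{0..<k-1}. real (abs_idx d n) - real j)"

definition rhs_term :: "nat \<Rightarrow> nat \<Rightarrow> (nat \<Rightarrow> real) \<Rightarrow> (nat \<Rightarrow> nat) \<Rightarrow> (nat \<Rightarrow> real) \<Rightarrow> nat \<Rightarrow> real" where
  "rhs_term d k \<gamma> n x i =
     (if \<forall>j\<in>{1..d}. 0 \<le> shifted_idx d k n i j
      then lam d k n (n i) (ext_param d k \<gamma> (-1) i) *
           P d (ext_param d k \<gamma> 1) (\<lambda>j. nat (shifted_idx d k n i j)) x
      else 0)"

end

theory Submission
  imports Defs
begin

text \<open>After dividing off powers of the coordinates, \<open>P\<close> is the mixed derivative \<open>\<partial>^n w\<close> of the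
  Jacobi weight \<open>w = \<Prod> y_i^a_i (1 - |y|)^b\<close>. For a coordinate \<open>j\<close> with parameter \<open>-1\<close> the exponent
  \<open>a_j = n_j - 1\<close> is one less than the order of differentiation in \<open>y_j\<close>. Comparing the Leibniz rule
  for the affine factor \<open>y_j\<close> with \<open>\<partial>_j (y_j w)\<close>, the two terms \<open>\<partial>^(n - e_j) w\<close> cancel, leaving
  \<open>y_j \<partial>^n w = -b \<partial>^(n - e_j) w'\<close> with exponents \<open>a + e_j\<close> and \<open>b - 1\<close>. Iterating over the last
  \<open>k - 1\<close> coordinates turns their parameters into \<open>+1\<close> and produces a rising factorial. The same
  Leibniz argument for the affine factor \<open>1 - |y|\<close> absorbs the remaining factor into the sum of the
  lower derivatives \<open>\<partial>^(m - e_i)\<close>, which are the functions with parameters \<open>+1\<close> on the right.\<close>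

definition simplex_eq :: "nat \<Rightarrow> ((nat \<Rightarrow> real) \<Rightarrow> real) \<Rightarrow> ((nat \<Rightarrow> real) \<Rightarrow> real) \<Rightarrow> bool" where
  "simplex_eq d f g \<longleftrightarrow> (\<forall>y\<in>simplex_interior d. f y = g y)"

lemma simplex_eq_refl [simp]: "simplex_eq d f f"
  by (simp add: simplex_eq_def)

lemma simplex_eq_sym: "simplex_eq d f g \<Longrightarrow> simplex_eq d g f"
  by (simp add: simplex_eq_def)

lemma simplex_eq_trans [trans]: "simplex_eq d f g \<Longrightarrow> simplex_eq d g h \<Longrightarrow> simplex_eq d f h"
  by (simp add: simplex_eq_def)

lemma simplex_interior_coord_pos: "y \<in> simplex_interior d \<Longrightarrow> l \<in> {1..d} \<Longrightarrow> 0 < y l"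
  by (simp add: simplex_interior_def)

lemma simplex_interior_slack_pos: "y \<in> simplex_interior d \<Longrightarrow> 0 < 1 - abs_pt d y"
  by (simp add: simplex_interior_def)

lemma abs_pt_fun_upd:
  assumes i: "i \<in> {1..d}"
  shows "abs_pt d (y(i := t)) = abs_pt d y - y i + t"
proof -
  have "abs_pt d (y(i := t)) = t + (\<Sum>j\<in>{1..d}-{i}. (y(i := t)) j)"
    using i unfolding abs_pt_def by (subst sum.remove) auto
  moreover have "(\<Sum>j\<in>{1..d}-{i}. (y(i := t)) j) = (\<Sum>j\<in>{1..d}-{i}. y j)"
    by (rule sum.cong) auto
  moreover have "abs_pt d y = y i + (\<Sum>j\<in>{1..d}-{i}. y j)"
    using i unfolding abs_pt_def by (subst sum.remove) auto
  ultimately show ?thesis by simp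
qed

lemma eventually_fun_upd_in_simplex_interior:
  assumes y: "y \<in> simplex_interior d" and i: "i \<in> {1..d}"
  shows "\<forall>\<^sub>F t in nhds (y i). y(i := t) \<in> simplex_interior d"
proof -
  have "\<forall>\<^sub>F t in nhds (y i). t \<in> {0<..<1 - abs_pt d y + y i}"
    using simplex_interior_coord_pos[OF y i] simplex_interior_slack_pos[OF y]
    by (intro eventually_nhds_in_open) auto
  then show ?thesis
    by eventually_elim (use y i in \<open>auto simp: simplex_interior_def abs_pt_fun_upd\<close>)
qed

lemma partial_eqI:
  "((\<lambda>t. f (y(i := t))) has_real_derivative D) (at (y i)) \<Longrightarrow> partial i f y = D"
  unfolding partial_def by (rule DERIV_imp_deriv)

lemma partial_simplex_eqI:
  assumes "\<And>y. y \<in> simplex_interior d \<Longrightarrow> ((\<lambda>t. f (y(i := t))) has_real_derivative D y) (at (y i))"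
  shows "simplex_eq d (partial i f) D"
  using assms partial_eqI unfolding simplex_eq_def by blast

lemma simplex_eq_eventually_line:
  assumes "simplex_eq d f g" "y \<in> simplex_interior d" "i \<in> {1..d}"
  shows "\<forall>\<^sub>F t in nhds (y i). f (y(i := t)) = g (y(i := t))"
  using eventually_fun_upd_in_simplex_interior[OF assms(2,3)]
  by eventually_elim (use assms(1) in \<open>auto simp: simplex_eq_def\<close>)

lemma partial_simplex_eq:
  assumes "simplex_eq d f g" "i \<in> {1..d}"
  shows "simplex_eq d (partial i f) (partial i g)"
  unfolding simplex_eq_def partial_def
  using simplex_eq_eventually_line[OF assms(1) _ assms(2)] by (auto intro: deriv_cong_ev)

lemma partial_const [simp]: "partial i (\<lambda>y. c) = (\<lambda>y. 0)"
  by (rule ext, rule partial_eqI) simp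

lemma coord_powr_line_deriv:
  assumes "y \<in> simplex_interior d" "i \<in> {1..d}"
  shows "((\<lambda>t. (y(i := t)) l powr e) has_real_derivative
           (if i = l then e * y l powr (e - 1) else 0)) (at (y i))"
  using has_real_derivative_powr[OF simplex_interior_coord_pos[OF assms], of e] by auto

lemma slack_powr_line_deriv:
  assumes y: "y \<in> simplex_interior d" and i: "i \<in> {1..d}"
  shows "((\<lambda>t. (1 - abs_pt d (y(i := t))) powr b) has_real_derivative
           - b * (1 - abs_pt d y) powr (b - 1)) (at (y i))"
proof -
  have "((\<lambda>t. (1 - (abs_pt d y - y i + t)) powr b) has_real_derivative
          b * (1 - (abs_pt d y - y i + y i)) powr (b - of_nat 1) * (-1)) (at (y i))"
    by (rule DERIV_fun_powr)
      (use simplex_interior_slack_pos[OF y] in \<open>auto intro!: derivative_eq_intros\<close>)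
  then show ?thesis by (simp add: abs_pt_fun_upd[OF i])
qed

lemma partial_coord_powr:
  "i \<in> {1..d} \<Longrightarrow> simplex_eq d (partial i (\<lambda>y. y l powr e))
     (\<lambda>y. if i = l then e * y l powr (e - 1) else 0)"
  by (rule partial_simplex_eqI) (rule coord_powr_line_deriv)

lemma partial_slack_powr:
  "i \<in> {1..d} \<Longrightarrow> simplex_eq d (partial i (\<lambda>y. (1 - abs_pt d y) powr b))
     (\<lambda>y. - b * (1 - abs_pt d y) powr (b - 1))"
  by (rule partial_simplex_eqI) (rule slack_powr_line_deriv)

text \<open>All functions of the argument lie in this class: on it, partial derivatives exist along
  coordinate lines, stay in the class, and commute.\<close>
inductive admissible :: "nat \<Rightarrow> ((nat \<Rightarrow> real) \<Rightarrow> real) \<Rightarrow> bool" for d where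
  admissible_const: "admissible d (\<lambda>y. c)"
| admissible_coord_powr: "l \<in> {1..d} \<Longrightarrow> admissible d (\<lambda>y. y l powr e)"
| admissible_slack_powr: "admissible d (\<lambda>y. (1 - abs_pt d y) powr b)"
| admissible_add: "admissible d f \<Longrightarrow> admissible d g \<Longrightarrow> admissible d (\<lambda>y. f y + g y)"
| admissible_mult: "admissible d f \<Longrightarrow> admissible d g \<Longrightarrow> admissible d (\<lambda>y. f y * g y)"
| admissible_simplex_eq: "admissible d f \<Longrightarrow> simplex_eq d f g \<Longrightarrow> admissible d g"

lemma admissible_partial_if_line_deriv:
  assumes deriv: "\<And>y. y \<in> simplex_interior d \<Longrightarrow> ((\<lambda>t. f (y(i := t))) has_real_derivative D y) (at (y i))"
    and "admissible d D"
  shows "admissible d (partial i f) \<and>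
    (\<forall>y\<in>simplex_interior d. ((\<lambda>t. f (y(i := t))) has_real_derivative partial i f y) (at (y i)))"
  using partial_simplex_eqI[OF deriv] deriv assms(2)
  by (auto simp: simplex_eq_def intro: admissible_simplex_eq[OF _ simplex_eq_sym])

lemma admissible_partial_line_deriv:
  assumes "admissible d f" "i \<in> {1..d}"
  shows "admissible d (partial i f) \<and>
    (\<forall>y\<in>simplex_interior d. ((\<lambda>t. f (y(i := t))) has_real_derivative partial i f y) (at (y i)))"
  using assms
proof induction
  case (admissible_const c)
  show ?case by (rule admissible_partial_if_line_deriv[where D="\<lambda>y. 0"]) (auto intro: admissible.intros)
next
  case (admissible_coord_powr l e)
  have "admissible d (\<lambda>y. if i = l then e * y l powr (e - 1) else 0)"
    using admissible_mult[OF admissible_const admissible.admissible_coord_powr[OF admissible_coord_powr.hyps]]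
    by (cases "i = l") (auto intro: admissible_const)
  with coord_powr_line_deriv[OF _ admissible_coord_powr.prems] show ?case
    by (rule admissible_partial_if_line_deriv)
next
  case (admissible_slack_powr b)
  show ?case
    using slack_powr_line_deriv[OF _ admissible_slack_powr.prems]
    by (rule admissible_partial_if_line_deriv)
      (assumption, rule admissible_mult[OF admissible_const admissible.admissible_slack_powr])
next
  case (admissible_add f g)
  then show ?case
    by (intro admissible_partial_if_line_deriv[where D="\<lambda>y. partial i f y + partial i g y"])
      (auto intro: DERIV_add admissible.intros)
next
  case (admissible_mult f g)
  have "((\<lambda>t. f (y(i := t)) * g (y(i := t))) has_real_derivative
      partial i f y * g y + f y * partial i g y) (at (y i))" if "y \<in> simplex_interior d" for y
  proof -
    have "((\<lambda>t. f (y(i := t))) has_real_derivative partial i f y) (at (y i))"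
      and "((\<lambda>t. g (y(i := t))) has_real_derivative partial i g y) (at (y i))"
      using admissible_mult.IH[OF admissible_mult.prems] that by blast+
    from DERIV_mult[OF this] show ?thesis by (simp add: algebra_simps)
  qed
  then show ?case
    by (rule admissible_partial_if_line_deriv) (use admissible_mult in \<open>auto intro: admissible.intros\<close>)
next
  case (admissible_simplex_eq f g)
  have "((\<lambda>t. g (y(i := t))) has_real_derivative partial i f y) (at (y i))"
    if y: "y \<in> simplex_interior d" for y
  proof -
    have "((\<lambda>t. f (y(i := t))) has_real_derivative partial i f y) (at (y i))"
      using admissible_simplex_eq.IH[OF admissible_simplex_eq.prems] y by blast
    moreover have "f y = g y"
      using admissible_simplex_eq.hyps(2) y by (simp add: simplex_eq_def)
    ultimately show ?thesis
      using DERIV_cong_ev[OF refl simplex_eq_eventually_line[OF admissible_simplex_eq.hyps(2) y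
          admissible_simplex_eq.prems] refl] by simp
  qed
  then show ?case
    by (rule admissible_partial_if_line_deriv)
      (assumption, rule conjunct1[OF admissible_simplex_eq.IH[OF admissible_simplex_eq.prems]])
qed

lemma admissible_partial: "admissible d f \<Longrightarrow> i \<in> {1..d} \<Longrightarrow> admissible d (partial i f)"
  using admissible_partial_line_deriv by blast

lemma admissible_line_deriv:
  "admissible d f \<Longrightarrow> i \<in> {1..d} \<Longrightarrow> y \<in> simplex_interior d \<Longrightarrow>
    ((\<lambda>t. f (y(i := t))) has_real_derivative partial i f y) (at (y i))"
  using admissible_partial_line_deriv by blast

lemma admissible_cmult: "admissible d f \<Longrightarrow> admissible d (\<lambda>y. c * f y)"
  by (rule admissible_mult[OF admissible_const])

lemma admissible_sum:
  "finite A \<Longrightarrow> (\<And>a. a \<in> A \<Longrightarrow> admissible d (f a)) \<Longrightarrow> admissible d (\<lambda>y. \<Sum>a\<in>A. f a y)"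
  by (induction A rule: finite_induct) (auto intro: admissible_const admissible_add)

lemma admissible_prod:
  "finite A \<Longrightarrow> (\<And>a. a \<in> A \<Longrightarrow> admissible d (f a)) \<Longrightarrow> admissible d (\<lambda>y. \<Prod>a\<in>A. f a y)"
  by (induction A rule: finite_induct) (auto intro: admissible_const admissible_mult)

lemma partial_add:
  assumes "admissible d f" "admissible d g" "i \<in> {1..d}"
  shows "simplex_eq d (partial i (\<lambda>y. f y + g y)) (\<lambda>y. partial i f y + partial i g y)"
  by (rule partial_simplex_eqI) (auto intro!: DERIV_add admissible_line_deriv assms)

lemma partial_mult:
  assumes "admissible d f" "admissible d g" "i \<in> {1..d}"
  shows "simplex_eq d (partial i (\<lambda>y. f y * g y)) (\<lambda>y. partial i f y * g y + f y * partial i g y)"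
proof (rule partial_simplex_eqI)
  fix y assume y: "y \<in> simplex_interior d"
  from DERIV_mult[OF admissible_line_deriv[OF assms(1,3) y] admissible_line_deriv[OF assms(2,3) y]]
  show "((\<lambda>t. f (y(i := t)) * g (y(i := t))) has_real_derivative
      partial i f y * g y + f y * partial i g y) (at (y i))"
    by (simp add: algebra_simps)
qed

lemma partial_cmult:
  "admissible d f \<Longrightarrow> i \<in> {1..d} \<Longrightarrow> simplex_eq d (partial i (\<lambda>y. c * f y)) (\<lambda>y. c * partial i f y)"
  using partial_mult[OF admissible_const] by (simp add: simplex_eq_def)

lemma partial_sum:
  assumes "finite A" "\<And>a. a \<in> A \<Longrightarrow> admissible d (f a)" "i \<in> {1..d}"
  shows "simplex_eq d (partial i (\<lambda>y. \<Sum>a\<in>A. f a y)) (\<lambda>y. \<Sum>a\<in>A. partial i (f a) y)"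
  using assms(1,2)
proof (induction A rule: finite_induct)
  case (insert a A)
  have "simplex_eq d (partial i (\<lambda>y. f a y + (\<Sum>a\<in>A. f a y)))
      (\<lambda>y. partial i (f a) y + partial i (\<lambda>y. \<Sum>a\<in>A. f a y) y)"
    by (rule partial_add) (use insert assms(3) in \<open>auto intro: admissible_sum\<close>)
  with insert show ?case by (simp add: simplex_eq_def)
qed simp

lemma partial_partial_add:
  assumes f: "admissible d f" and g: "admissible d g" and i: "i \<in> {1..d}" and j: "j \<in> {1..d}"
  shows "simplex_eq d (partial i (partial j (\<lambda>y. f y + g y)))
    (\<lambda>y. partial i (partial j f) y + partial i (partial j g) y)"
proof -
  have "simplex_eq d (partial i (partial j (\<lambda>y. f y + g y))) (partial i (\<lambda>y. partial j f y + partial j g y))"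
    by (rule partial_simplex_eq[OF partial_add[OF f g j] i])
  also have "simplex_eq d \<dots> (\<lambda>y. partial i (partial j f) y + partial i (partial j g) y)"
    by (rule partial_add[OF admissible_partial[OF f j] admissible_partial[OF g j] i])
  finally show ?thesis .
qed

lemma partial_partial_mult:
  assumes f: "admissible d f" and g: "admissible d g" and i: "i \<in> {1..d}" and j: "j \<in> {1..d}"
  shows "simplex_eq d (partial i (partial j (\<lambda>y. f y * g y)))
     (\<lambda>y. partial i (partial j f) y * g y + partial j f y * partial i g y
        + partial i f y * partial j g y + f y * partial i (partial j g) y)"
proof -
  note fj = admissible_partial[OF f j] and gj = admissible_partial[OF g j]
  have "simplex_eq d (partial i (partial j (\<lambda>y. f y * g y)))
      (partial i (\<lambda>y. partial j f y * g y + f y * partial j g y))"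
    by (rule partial_simplex_eq[OF partial_mult[OF f g j] i])
  also have "simplex_eq d \<dots>
      (\<lambda>y. partial i (\<lambda>y. partial j f y * g y) y + partial i (\<lambda>y. f y * partial j g y) y)"
    by (rule partial_add[OF admissible_mult[OF fj g] admissible_mult[OF f gj] i])
  finally show ?thesis
    using partial_mult[OF fj g i] partial_mult[OF f gj i] by (simp add: simplex_eq_def algebra_simps)
qed

lemma partial_commute:
  assumes "admissible d f" and i: "i \<in> {1..d}" and j: "j \<in> {1..d}"
  shows "simplex_eq d (partial i (partial j f)) (partial j (partial i f))"
  using assms(1)
proof induction
  case (admissible_coord_powr l e)
  have "simplex_eq d (partial i (partial j (\<lambda>y. y l powr e)))
     (\<lambda>y. if i = l \<and> j = l then e * ((e - 1) * y l powr (e - 1 - 1)) else 0)"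
    if i: "i \<in> {1..d}" and j: "j \<in> {1..d}" for i j
  proof -
    have "simplex_eq d (partial i (partial j (\<lambda>y. y l powr e)))
        (partial i (\<lambda>y. if j = l then e * y l powr (e - 1) else 0))"
      by (rule partial_simplex_eq[OF partial_coord_powr[OF j] i])
    then show ?thesis
      using partial_cmult[OF admissible.admissible_coord_powr[OF admissible_coord_powr] i, of e "e - 1"]
        partial_coord_powr[OF i, of l "e - 1"]
      by (cases "j = l") (auto simp: simplex_eq_def)
  qed
  from this[OF i j] this[OF j i] show ?case by (auto simp: simplex_eq_def)
next
  case (admissible_slack_powr b)
  have "simplex_eq d (partial i (partial j (\<lambda>y. (1 - abs_pt d y) powr b)))
     (\<lambda>y. - b * (- (b - 1) * (1 - abs_pt d y) powr (b - 1 - 1)))"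
    if i: "i \<in> {1..d}" and j: "j \<in> {1..d}" for i j
  proof -
    have "simplex_eq d (partial i (partial j (\<lambda>y. (1 - abs_pt d y) powr b)))
        (partial i (\<lambda>y. - b * (1 - abs_pt d y) powr (b - 1)))"
      by (rule partial_simplex_eq[OF partial_slack_powr[OF j] i])
    then show ?thesis
      using partial_cmult[OF admissible.admissible_slack_powr i, of "- b" "b - 1"]
        partial_slack_powr[OF i, of "b - 1"]
      by (auto simp: simplex_eq_def)
  qed
  from this[OF i j] this[OF j i] show ?case by (auto simp: simplex_eq_def)
next
  case (admissible_add f g)
  then show ?case
    using partial_partial_add[OF admissible_add.hyps i j] partial_partial_add[OF admissible_add.hyps j i]
    unfolding simplex_eq_def by auto
next
  case (admissible_mult f g)
  then show ?case
    using partial_partial_mult[OF admissible_mult.hyps i j] partial_partial_mult[OF admissible_mult.hyps j i]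
    unfolding simplex_eq_def by (auto simp: algebra_simps)
next
  case (admissible_simplex_eq f g)
  have "simplex_eq d (partial i (partial j g)) (partial i (partial j f))"
    if i: "i \<in> {1..d}" and j: "j \<in> {1..d}" for i j
    using partial_simplex_eq[OF partial_simplex_eq[OF simplex_eq_sym[OF admissible_simplex_eq.hyps(2)] j] i] .
  from this[OF i j] this[OF j i] admissible_simplex_eq.IH show ?case
    unfolding simplex_eq_def by auto
qed simp

lemma admissible_partial_pow: "admissible d f \<Longrightarrow> i \<in> {1..d} \<Longrightarrow> admissible d ((partial i ^^ k) f)"
  by (induction k) (auto intro: admissible_partial)

lemma partial_pow_simplex_eq:
  "simplex_eq d f g \<Longrightarrow> i \<in> {1..d} \<Longrightarrow> simplex_eq d ((partial i ^^ k) f) ((partial i ^^ k) g)"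
  by (induction k) (auto intro: partial_simplex_eq)

lemma partial_pow_commute:
  assumes f: "admissible d f" and i: "i \<in> {1..d}" and j: "j \<in> {1..d}"
  shows "simplex_eq d ((partial j ^^ k) (partial i f)) (partial i ((partial j ^^ k) f))"
proof (induction k)
  case (Suc k)
  have "simplex_eq d (partial j ((partial j ^^ k) (partial i f))) (partial j (partial i ((partial j ^^ k) f)))"
    by (rule partial_simplex_eq[OF Suc j])
  also have "simplex_eq d \<dots> (partial i (partial j ((partial j ^^ k) f)))"
    by (rule partial_commute[OF admissible_partial_pow[OF f j] j i])
  finally show ?case by simp
qed simp

lemma partial_pow_add:
  assumes f: "admissible d f" and g: "admissible d g" and i: "i \<in> {1..d}"
  shows "simplex_eq d ((partial i ^^ k) (\<lambda>y. f y + g y)) (\<lambda>y. (partial i ^^ k) f y + (partial i ^^ k) g y)"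
proof (induction k)
  case (Suc k)
  have "simplex_eq d (partial i ((partial i ^^ k) (\<lambda>y. f y + g y)))
      (partial i (\<lambda>y. (partial i ^^ k) f y + (partial i ^^ k) g y))"
    by (rule partial_simplex_eq[OF Suc i])
  also have "simplex_eq d \<dots> (\<lambda>y. partial i ((partial i ^^ k) f) y + partial i ((partial i ^^ k) g) y)"
    by (rule partial_add[OF admissible_partial_pow[OF f i] admissible_partial_pow[OF g i] i])
  finally show ?case by simp
qed simp

lemma partial_pow_cmult:
  assumes f: "admissible d f" and i: "i \<in> {1..d}"
  shows "simplex_eq d ((partial i ^^ k) (\<lambda>y. c * f y)) (\<lambda>y. c * (partial i ^^ k) f y)"
proof (induction k)
  case (Suc k)
  have "simplex_eq d (partial i ((partial i ^^ k) (\<lambda>y. c * f y))) (partial i (\<lambda>y. c * (partial i ^^ k) f y))"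
    by (rule partial_simplex_eq[OF Suc i])
  also have "simplex_eq d \<dots> (\<lambda>y. c * partial i ((partial i ^^ k) f) y)"
    by (rule partial_cmult[OF admissible_partial_pow[OF f i] i])
  finally show ?case by simp
qed simp

definition partials :: "(nat \<Rightarrow> nat) \<Rightarrow> nat list \<Rightarrow> ((nat \<Rightarrow> real) \<Rightarrow> real) \<Rightarrow> (nat \<Rightarrow> real) \<Rightarrow> real" where
  "partials m L f = foldr (\<lambda>i g. (partial i ^^ m i) g) L f"

lemma partials_Nil [simp]: "partials m [] f = f"
  and partials_Cons [simp]: "partials m (i # L) f = (partial i ^^ m i) (partials m L f)"
  by (simp_all add: partials_def)

lemma mpartial_eq_partials: "mpartial d m f = partials m [1..<d+1] f"
  by (simp add: mpartial_def partials_def)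

lemma admissible_partials: "admissible d f \<Longrightarrow> set L \<subseteq> {1..d} \<Longrightarrow> admissible d (partials m L f)"
  by (induction L) (auto intro: admissible_partial_pow)

lemma partials_simplex_eq: "simplex_eq d f g \<Longrightarrow> set L \<subseteq> {1..d} \<Longrightarrow> simplex_eq d (partials m L f) (partials m L g)"
  by (induction L) (auto intro: partial_pow_simplex_eq)

lemma partials_cong_idx: "(\<And>i. i \<in> set L \<Longrightarrow> m i = m' i) \<Longrightarrow> partials m L f = partials m' L f"
  by (induction L) auto

lemma partials_commute:
  assumes f: "admissible d f" and i: "i \<in> {1..d}" and L: "set L \<subseteq> {1..d}"
  shows "simplex_eq d (partials m L (partial i f)) (partial i (partials m L f))"
  using L
proof (induction L)
  case (Cons j L)
  then have j: "j \<in> {1..d}" and L: "set L \<subseteq> {1..d}" by auto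
  have "simplex_eq d ((partial j ^^ m j) (partials m L (partial i f))) ((partial j ^^ m j) (partial i (partials m L f)))"
    by (rule partial_pow_simplex_eq[OF Cons.IH[OF L] j])
  also have "simplex_eq d \<dots> (partial i ((partial j ^^ m j) (partials m L f)))"
    by (rule partial_pow_commute[OF admissible_partials[OF f L] i j])
  finally show ?case by simp
qed simp

lemma partials_Suc_idx:
  assumes f: "admissible d f" and L: "distinct L" "set L \<subseteq> {1..d}" and i: "i \<in> set L"
  shows "simplex_eq d (partials (m(i := Suc (m i))) L f) (partial i (partials m L f))"
  using L i
proof (induction L)
  case (Cons j L)
  then have j: "j \<in> {1..d}" and L: "set L \<subseteq> {1..d}" and i: "i \<in> {1..d}" by auto
  show ?case
  proof (cases "j = i")
    case True
    with Cons.prems have "partials (m(i := Suc (m i))) L f = partials m L f"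
      by (intro partials_cong_idx) auto
    with True show ?thesis by (simp del: fun_upd_apply) simp
  next
    case False
    have "simplex_eq d ((partial j ^^ m j) (partials (m(i := Suc (m i))) L f))
        ((partial j ^^ m j) (partial i (partials m L f)))"
      by (rule partial_pow_simplex_eq[OF Cons.IH j]) (use Cons.prems False in auto)
    also have "simplex_eq d \<dots> (partial i ((partial j ^^ m j) (partials m L f)))"
      by (rule partial_pow_commute[OF admissible_partials[OF f L] i j])
    finally show ?thesis using False by (simp add: fun_upd_other del: fun_upd_apply)
  qed
qed simp

lemma partials_add:
  assumes f: "admissible d f" and g: "admissible d g" and L: "set L \<subseteq> {1..d}"
  shows "simplex_eq d (partials m L (\<lambda>y. f y + g y)) (\<lambda>y. partials m L f y + partials m L g y)"
  using L
proof (induction L)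
  case (Cons j L)
  then have j: "j \<in> {1..d}" and L: "set L \<subseteq> {1..d}" by auto
  have "simplex_eq d ((partial j ^^ m j) (partials m L (\<lambda>y. f y + g y)))
      ((partial j ^^ m j) (\<lambda>y. partials m L f y + partials m L g y))"
    by (rule partial_pow_simplex_eq[OF Cons.IH[OF L] j])
  also have "simplex_eq d \<dots> (\<lambda>y. (partial j ^^ m j) (partials m L f) y + (partial j ^^ m j) (partials m L g) y)"
    by (rule partial_pow_add[OF admissible_partials[OF f L] admissible_partials[OF g L] j])
  finally show ?case by simp
qed simp

lemma partials_cmult:
  assumes f: "admissible d f" and L: "set L \<subseteq> {1..d}"
  shows "simplex_eq d (partials m L (\<lambda>y. c * f y)) (\<lambda>y. c * partials m L f y)"
  using L
proof (induction L)
  case (Cons j L)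
  then have j: "j \<in> {1..d}" and L: "set L \<subseteq> {1..d}" by auto
  have "simplex_eq d ((partial j ^^ m j) (partials m L (\<lambda>y. c * f y))) ((partial j ^^ m j) (\<lambda>y. c * partials m L f y))"
    by (rule partial_pow_simplex_eq[OF Cons.IH[OF L] j])
  also have "simplex_eq d \<dots> (\<lambda>y. c * (partial j ^^ m j) (partials m L f) y)"
    by (rule partial_pow_cmult[OF admissible_partials[OF f L] j])
  finally show ?case by simp
qed simp

lemma set_upt_coords: "set [1..<d+1] \<subseteq> {1..d}"
  by auto

lemma admissible_mpartial: "admissible d f \<Longrightarrow> admissible d (mpartial d m f)"
  unfolding mpartial_eq_partials by (rule admissible_partials[OF _ set_upt_coords])

lemma mpartial_simplex_eq: "simplex_eq d f g \<Longrightarrow> simplex_eq d (mpartial d m f) (mpartial d m g)"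
  unfolding mpartial_eq_partials by (rule partials_simplex_eq[OF _ set_upt_coords])

lemma mpartial_cong_idx: "(\<And>i. i \<in> {1..d} \<Longrightarrow> m i = m' i) \<Longrightarrow> mpartial d m f = mpartial d m' f"
  unfolding mpartial_eq_partials by (rule partials_cong_idx) auto

lemma mpartial_zero_idx: "(\<And>i. i \<in> {1..d} \<Longrightarrow> m i = 0) \<Longrightarrow> mpartial d m f = f"
proof -
  have "(\<And>i. i \<in> set L \<Longrightarrow> m i = 0) \<Longrightarrow> partials m L f = f" for L
    by (induction L) auto
  then show "(\<And>i. i \<in> {1..d} \<Longrightarrow> m i = 0) \<Longrightarrow> mpartial d m f = f"
    unfolding mpartial_eq_partials using set_upt_coords by blast
qed

lemma mpartial_commute:
  "admissible d f \<Longrightarrow> i \<in> {1..d} \<Longrightarrow> simplex_eq d (mpartial d m (partial i f)) (partial i (mpartial d m f))"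
  unfolding mpartial_eq_partials by (rule partials_commute[OF _ _ set_upt_coords])

lemma mpartial_Suc_idx:
  "admissible d f \<Longrightarrow> i \<in> {1..d} \<Longrightarrow>
    simplex_eq d (mpartial d (m(i := Suc (m i))) f) (partial i (mpartial d m f))"
  unfolding mpartial_eq_partials by (rule partials_Suc_idx) auto

lemma mpartial_add:
  "admissible d f \<Longrightarrow> admissible d g \<Longrightarrow>
    simplex_eq d (mpartial d m (\<lambda>y. f y + g y)) (\<lambda>y. mpartial d m f y + mpartial d m g y)"
  unfolding mpartial_eq_partials by (rule partials_add[OF _ _ set_upt_coords])

lemma mpartial_cmult:
  "admissible d f \<Longrightarrow> simplex_eq d (mpartial d m (\<lambda>y. c * f y)) (\<lambda>y. c * mpartial d m f y)"
  unfolding mpartial_eq_partials by (rule partials_cmult[OF _ set_upt_coords])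

definition dec_idx :: "(nat \<Rightarrow> nat) \<Rightarrow> nat \<Rightarrow> nat \<Rightarrow> nat" where
  "dec_idx m i = m(i := m i - 1)"

lemma abs_idx_dec_idx:
  assumes i: "i \<in> {1..d}" and mi: "1 \<le> m i"
  shows "abs_idx d m = Suc (abs_idx d (dec_idx m i))"
proof -
  have "abs_idx d m = m i + (\<Sum>j\<in>{1..d}-{i}. m j)"
    using i unfolding abs_idx_def by (subst sum.remove) auto
  moreover have "(\<Sum>j\<in>{1..d}-{i}. dec_idx m i j) = (\<Sum>j\<in>{1..d}-{i}. m j)"
    by (rule sum.cong) (auto simp: dec_idx_def)
  moreover have "abs_idx d (dec_idx m i) = dec_idx m i i + (\<Sum>j\<in>{1..d}-{i}. dec_idx m i j)"
    using i unfolding abs_idx_def by (subst sum.remove) auto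
  ultimately show ?thesis using mi by (simp add: dec_idx_def)
qed

lemma abs_idx_dec_on_set:
  assumes "K \<subseteq> {1..d}" "\<And>j. j \<in> K \<Longrightarrow> 1 \<le> n j"
  shows "real (abs_idx d (\<lambda>l. if l \<in> K then n l - 1 else n l)) = real (abs_idx d n) - real (card K)"
proof -
  have "real (abs_idx d (\<lambda>l. if l \<in> K then n l - 1 else n l)) = (\<Sum>l=1..d. real (n l) - (if l \<in> K then 1 else 0))"
    unfolding abs_idx_def of_nat_sum using assms(2) by (intro sum.cong) (auto simp: of_nat_diff)
  also have "\<dots> = real (abs_idx d n) - real (card K)"
    using assms(1) by (simp add: sum_subtractf abs_idx_def sum.If_cases Int_absorb1)
  finally show ?thesis .
qed

lemma sum_dec_idx:
  assumes i: "i \<in> {1..d}" and mi: "1 \<le> m i"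
  shows "(\<Sum>l=1..d. real (m l) * X l) = (\<Sum>l=1..d. real (dec_idx m i l) * X l) + X i"
proof -
  have "(\<Sum>l=1..d. real (m l) * X l) = (\<Sum>l=1..d. real (dec_idx m i l) * X l + (if l = i then X l else 0))"
    using mi by (intro sum.cong) (auto simp: dec_idx_def of_nat_diff algebra_simps)
  also have "\<dots> = (\<Sum>l=1..d. real (dec_idx m i l) * X l) + X i"
    using i by (simp add: sum.distrib)
  finally show ?thesis .
qed

lemma mpartial_dec_idx:
  "admissible d f \<Longrightarrow> i \<in> {1..d} \<Longrightarrow> 1 \<le> m i \<Longrightarrow>
    simplex_eq d (mpartial d m f) (partial i (mpartial d (dec_idx m i) f))"
  using mpartial_Suc_idx[of d f i "dec_idx m i"] by (simp add: dec_idx_def)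

lemma mpartial_dec_idx_partial:
  "admissible d f \<Longrightarrow> i \<in> {1..d} \<Longrightarrow> 1 \<le> m i \<Longrightarrow>
    simplex_eq d (mpartial d m f) (mpartial d (dec_idx m i) (partial i f))"
  using mpartial_dec_idx[of d f i m] mpartial_commute[of d f i "dec_idx m i"]
  by (simp add: simplex_eq_def)

lemma partial_sum_mpartial_dec_idx:
  assumes f: "admissible d f" and i: "i \<in> {1..d}" and mi: "1 \<le> m i"
  defines "m' \<equiv> dec_idx m i"
  shows "simplex_eq d (partial i (\<lambda>y. \<Sum>l=1..d. real (m' l) * (c l * mpartial d (dec_idx m' l) f y)))
    (\<lambda>y. \<Sum>l=1..d. real (m' l) * (c l * mpartial d (dec_idx m l) f y))"
proof -
  have S: "admissible d (\<lambda>y. real (m' l) * (c l * mpartial d (dec_idx m' l) f y))" for l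
    by (intro admissible_cmult admissible_mpartial f)
  have "simplex_eq d (partial i (\<lambda>y. real (m' l) * (c l * mpartial d (dec_idx m' l) f y)))
      (\<lambda>y. real (m' l) * (c l * mpartial d (dec_idx m l) f y))" for l
  proof (cases "1 \<le> m' l")
    case True
    have "(dec_idx m' l)(i := Suc (dec_idx m' l i)) = dec_idx m l"
      using mi True by (auto simp: m'_def dec_idx_def fun_eq_iff)
    then have "simplex_eq d (partial i (mpartial d (dec_idx m' l) f)) (mpartial d (dec_idx m l) f)"
      using simplex_eq_sym[OF mpartial_Suc_idx[OF f i, of "dec_idx m' l"]] by simp
    then show ?thesis
      using partial_cmult[OF admissible_mpartial[OF f] i, of "real (m' l) * c l" "dec_idx m' l"]
      unfolding simplex_eq_def by (simp add: mult.assoc)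
  next
    case False
    then have "m' l = 0" by linarith
    then show ?thesis by (simp add: simplex_eq_def)
  qed
  then show ?thesis
    using partial_sum[OF _ S i, of "{1..d}"] by (simp add: simplex_eq_def)
qed

lemma mpartial_mult_affine:
  assumes f: "admissible d f" and A: "admissible d A"
    and dA: "\<And>l. l \<in> {1..d} \<Longrightarrow> simplex_eq d (partial l A) (\<lambda>y. c l)"
  shows "simplex_eq d (mpartial d m (\<lambda>y. A y * f y))
     (\<lambda>y. A y * mpartial d m f y + (\<Sum>l=1..d. real (m l) * (c l * mpartial d (dec_idx m l) f y)))"
proof (induction "abs_idx d m" arbitrary: m)
  case 0
  then have m: "\<And>l. l \<in> {1..d} \<Longrightarrow> m l = 0" by (simp add: abs_idx_def)
  show ?case by (simp only: mpartial_zero_idx[of d m, OF m]) (simp add: m)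
next
  case (Suc N)
  have "\<exists>i\<in>{1..d}. m i \<noteq> 0"
    using Suc.hyps(2) unfolding abs_idx_def by (metis nat.distinct(1) sum.neutral)
  then obtain i where i: "i \<in> {1..d}" and mi: "1 \<le> m i" by auto
  define m' where "m' = dec_idx m i"
  have N: "N = abs_idx d m'" using Suc.hyps(2) abs_idx_dec_idx[of i d m, OF i mi] by (simp add: m'_def)
  define S where "S = (\<lambda>y. \<Sum>l=1..d. real (m' l) * (c l * mpartial d (dec_idx m' l) f y))"
  have S: "admissible d S" unfolding S_def by (intro admissible_sum admissible_cmult admissible_mpartial f) auto
  have Af: "admissible d (\<lambda>y. A y * mpartial d m' f y)" by (intro admissible_mult A admissible_mpartial f)
  have "simplex_eq d (mpartial d m (\<lambda>y. A y * f y)) (partial i (mpartial d m' (\<lambda>y. A y * f y)))"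
    unfolding m'_def by (rule mpartial_dec_idx[where m=m, OF admissible_mult[OF A f] i mi])
  also have "simplex_eq d \<dots> (partial i (\<lambda>y. A y * mpartial d m' f y + S y))"
    using partial_simplex_eq[OF Suc.hyps(1)[OF N] i] unfolding S_def .
  also have "simplex_eq d \<dots> (\<lambda>y. partial i (\<lambda>y. A y * mpartial d m' f y) y + partial i S y)"
    by (rule partial_add[OF Af S i])
  also have "simplex_eq d \<dots> (\<lambda>y. (c i * mpartial d m' f y + A y * mpartial d m f y)
      + (\<Sum>l=1..d. real (m' l) * (c l * mpartial d (dec_idx m l) f y)))"
    using partial_mult[OF A admissible_mpartial[OF f] i] dA[OF i] mpartial_dec_idx[where m=m, OF f i mi]
      partial_sum_mpartial_dec_idx[where m=m, OF f i mi, of c]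
    unfolding m'_def S_def simplex_eq_def by simp
  also have "simplex_eq d \<dots> (\<lambda>y. A y * mpartial d m f y
      + (\<Sum>l=1..d. real (m l) * (c l * mpartial d (dec_idx m l) f y)))"
    using sum_dec_idx[of i d m, OF i mi, of "\<lambda>l. c l * mpartial d (dec_idx m l) f _"]
    unfolding simplex_eq_def m'_def by auto
  finally show ?case .
qed

definition jacobi_weight :: "nat \<Rightarrow> (nat \<Rightarrow> real) \<Rightarrow> real \<Rightarrow> (nat \<Rightarrow> real) \<Rightarrow> real" where
  "jacobi_weight d a b y = (\<Prod>l=1..d. y l powr a l) * (1 - abs_pt d y) powr b"

lemma P_eq_mpartial_jacobi_weight:
  "P d g m x = (\<Prod>i=1..d. x i powr (- g i)) * (1 - abs_pt d x) powr (- g (d+1)) *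
     mpartial d m (jacobi_weight d (\<lambda>i. g i + real (m i)) (g (d+1) + real (abs_idx d m))) x"
  unfolding P_def jacobi_weight_def ..

lemma admissible_jacobi_weight: "admissible d (jacobi_weight d a b)"
  unfolding jacobi_weight_def[abs_def]
  by (intro admissible_mult admissible_prod admissible_coord_powr admissible_slack_powr) auto

lemma jacobi_weight_cong:
  "(\<And>l. l \<in> {1..d} \<Longrightarrow> a l = a' l) \<Longrightarrow> jacobi_weight d a b = jacobi_weight d a' b"
  unfolding jacobi_weight_def[abs_def] by (intro ext arg_cong2[where f="(*)"] prod.cong) auto

lemma jacobi_weight_split:
  assumes "i \<in> {1..d}"
  shows "jacobi_weight d a b y = (\<Prod>l\<in>{1..d}-{i}. y l powr a l) * (y i powr a i * (1 - abs_pt d y) powr b)"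
  unfolding jacobi_weight_def using assms by (subst prod.remove[of "{1..d}" i]) (auto simp: ac_simps)

lemma jacobi_weight_slack:
  "simplex_eq d (jacobi_weight d a b) (\<lambda>y. (1 - abs_pt d y) * jacobi_weight d a (b - 1) y)"
  unfolding simplex_eq_def jacobi_weight_def
proof
  fix y assume "y \<in> simplex_interior d"
  then have "(1 - abs_pt d y) powr b = (1 - abs_pt d y) * (1 - abs_pt d y) powr (b - 1)"
    using simplex_interior_slack_pos[of y d] by (simp add: powr_diff)
  then show "(\<Prod>l=1..d. y l powr a l) * (1 - abs_pt d y) powr b =
      (1 - abs_pt d y) * ((\<Prod>l=1..d. y l powr a l) * (1 - abs_pt d y) powr (b - 1))"
    by simp
qed

lemma jacobi_weight_coord:
  assumes j: "j \<in> {1..d}"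
  shows "simplex_eq d (\<lambda>y. y j * jacobi_weight d a b y) (jacobi_weight d (a(j := a j + 1)) b)"
  unfolding simplex_eq_def
proof
  fix y assume y: "y \<in> simplex_interior d"
  have "(\<Prod>l\<in>{1..d}-{j}. y l powr (a(j := a j + 1)) l) = (\<Prod>l\<in>{1..d}-{j}. y l powr a l)"
    by (rule prod.cong) auto
  then show "y j * jacobi_weight d a b y = jacobi_weight d (a(j := a j + 1)) b y"
    using simplex_interior_coord_pos[OF y j]
    by (simp add: jacobi_weight_split[OF j] powr_add)
qed

lemma partial_jacobi_weight:
  assumes i: "i \<in> {1..d}"
  shows "simplex_eq d (partial i (jacobi_weight d a b))
    (\<lambda>y. a i * jacobi_weight d (a(i := a i - 1)) b y - b * jacobi_weight d a (b - 1) y)"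
proof (rule partial_simplex_eqI)
  fix y assume y: "y \<in> simplex_interior d"
  define C where "C = (\<Prod>l\<in>{1..d}-{i}. y l powr a l)"
  define S where "S = abs_pt d y - y i"
  have C: "(\<Prod>l\<in>{1..d}-{i}. z l powr a' l) = C" if "\<And>l. l \<noteq> i \<Longrightarrow> z l = y l \<and> a' l = a l" for z a'
    unfolding C_def using that by (intro prod.cong) auto
  have line: "jacobi_weight d a b (y(i := t)) = C * (t powr a i * (1 - (S + t)) powr b)" for t
    using C[of "y(i := t)" a] by (simp add: jacobi_weight_split[OF i] abs_pt_fun_upd[OF i] S_def algebra_simps)
  have pos: "0 < y i" using simplex_interior_coord_pos[OF y i] .
  have slack: "0 < 1 - (S + y i)" using simplex_interior_slack_pos[OF y] by (simp add: S_def)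
  have "((\<lambda>t. C * (t powr a i * (1 - (S + t)) powr b)) has_real_derivative
      C * (a i * y i powr (a i - 1) * (1 - (S + y i)) powr b
        + y i powr a i * (b * (1 - (S + y i)) powr (b - of_nat 1) * (-1)))) (at (y i))"
    by (intro DERIV_cmult DERIV_mult has_real_derivative_powr pos DERIV_fun_powr)
      (use slack pos in \<open>auto intro!: derivative_eq_intros\<close>)
  moreover have "jacobi_weight d (a(i := a i - 1)) b y = C * (y i powr (a i - 1) * (1 - (S + y i)) powr b)"
    and "jacobi_weight d a (b - 1) y = C * (y i powr a i * (1 - (S + y i)) powr (b - 1))"
    using C[of y "a(i := a i - 1)"] C[of y a] by (simp_all add: jacobi_weight_split[OF i] S_def)
  ultimately show "((\<lambda>t. jacobi_weight d a b (y(i := t))) has_real_derivative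
      a i * jacobi_weight d (a(i := a i - 1)) b y - b * jacobi_weight d a (b - 1) y) (at (y i))"
    by (simp add: line algebra_simps)
qed

lemma admissible_slack: "admissible d (\<lambda>y. 1 - abs_pt d y)"
  by (rule admissible_simplex_eq[OF admissible_slack_powr[of d 1]])
    (simp add: simplex_eq_def simplex_interior_def)

lemma partial_slack: "i \<in> {1..d} \<Longrightarrow> simplex_eq d (partial i (\<lambda>y. 1 - abs_pt d y)) (\<lambda>y. -1)"
  by (rule partial_simplex_eqI) (auto simp: abs_pt_fun_upd intro!: derivative_eq_intros)

lemma mpartial_jacobi_weight_dec_idx:
  assumes i: "i \<in> {1..d}" and mi: "1 \<le> m i"
  shows "simplex_eq d (\<lambda>y. a i * mpartial d (dec_idx m i) (jacobi_weight d (a(i := a i - 1)) b) y)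
    (\<lambda>y. mpartial d m (jacobi_weight d a b) y + b * mpartial d (dec_idx m i) (jacobi_weight d a (b - 1)) y)"
proof -
  note w = admissible_jacobi_weight
  have "simplex_eq d (\<lambda>y. a i * jacobi_weight d (a(i := a i - 1)) b y)
      (\<lambda>y. partial i (jacobi_weight d a b) y + b * jacobi_weight d a (b - 1) y)"
    using partial_jacobi_weight[OF i, of a b] by (simp add: simplex_eq_def)
  then have "simplex_eq d (mpartial d (dec_idx m i) (\<lambda>y. a i * jacobi_weight d (a(i := a i - 1)) b y))
      (\<lambda>y. mpartial d (dec_idx m i) (partial i (jacobi_weight d a b)) y
        + mpartial d (dec_idx m i) (\<lambda>y. b * jacobi_weight d a (b - 1) y) y)"
    using mpartial_simplex_eq mpartial_add[OF admissible_partial[OF w i] admissible_cmult[OF w]]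
    by (blast intro: simplex_eq_trans)
  then show ?thesis
    using mpartial_cmult[OF w, of d "dec_idx m i"] mpartial_dec_idx_partial[OF w i, where m=m, OF mi]
    by (simp add: simplex_eq_def)
qed

lemma slack_mult_mpartial_jacobi_weight:
  fixes d :: nat and m :: "nat \<Rightarrow> nat" and a :: "nat \<Rightarrow> real"
  defines "M \<equiv> real (abs_idx d m)"
  shows "simplex_eq d (\<lambda>y. M * ((1 - abs_pt d y) * mpartial d m (jacobi_weight d a (M - 1)) y))
    (\<lambda>y. \<Sum>i=1..d. real (m i) * a i * mpartial d (dec_idx m i) (jacobi_weight d (a(i := a i - 1)) M) y)"
  unfolding simplex_eq_def
proof
  fix y assume y: "y \<in> simplex_interior d"
  define f where "f = jacobi_weight d a (M - 1)"
  define g where "g = jacobi_weight d a M"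
  have f: "admissible d f" unfolding f_def by (rule admissible_jacobi_weight)
  have summand: "real (m i) * a i * mpartial d (dec_idx m i) (jacobi_weight d (a(i := a i - 1)) M) y
      = real (m i) * (mpartial d m g y + M * mpartial d (dec_idx m i) f y)" if i: "i \<in> {1..d}" for i
  proof (cases "m i = 0")
    case False
    then show ?thesis
      using mpartial_jacobi_weight_dec_idx[OF i, of m a M] y unfolding simplex_eq_def f_def g_def by simp
  qed simp
  have leibniz: "mpartial d m g y = (1 - abs_pt d y) * mpartial d m f y - (\<Sum>l=1..d. real (m l) * mpartial d (dec_idx m l) f y)"
    using mpartial_simplex_eq[OF jacobi_weight_slack[of d a M], of m]
      mpartial_mult_affine[OF f admissible_slack partial_slack, of m] y
    unfolding simplex_eq_def f_def g_def by (simp add: sum_negf)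
  have "(\<Sum>i=1..d. real (m i) * a i * mpartial d (dec_idx m i) (jacobi_weight d (a(i := a i - 1)) M) y)
      = (\<Sum>i=1..d. real (m i)) * mpartial d m g y + M * (\<Sum>i=1..d. real (m i) * mpartial d (dec_idx m i) f y)"
    by (simp add: summand distrib_left sum.distrib sum_distrib_left sum_distrib_right mult.left_commute)
  also have "\<dots> = M * ((1 - abs_pt d y) * mpartial d m f y)"
    by (simp add: leibniz M_def abs_idx_def algebra_simps)
  finally show "M * ((1 - abs_pt d y) * mpartial d m (jacobi_weight d a (M - 1)) y) =
      (\<Sum>i=1..d. real (m i) * a i * mpartial d (dec_idx m i) (jacobi_weight d (a(i := a i - 1)) M) y)"
    by (simp add: f_def)
qed

lemma admissible_coord: "j \<in> {1..d} \<Longrightarrow> admissible d (\<lambda>y. y j)"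
  by (rule admissible_simplex_eq[OF admissible_coord_powr[of j d 1]])
    (auto simp: simplex_eq_def intro!: abs_of_pos simplex_interior_coord_pos)

lemma partial_coord: "partial l (\<lambda>y. y j) = (\<lambda>y. if l = j then 1 else 0)"
  by (rule ext, rule partial_eqI) auto

lemma coord_mult_mpartial_jacobi_weight:
  assumes j: "j \<in> {1..d}" and mj: "1 \<le> m j" and aj: "a j = real (m j) - 1"
  shows "simplex_eq d (\<lambda>y. y j * mpartial d m (jacobi_weight d a b) y)
    (\<lambda>y. - b * mpartial d (dec_idx m j) (jacobi_weight d (a(j := a j + 1)) (b - 1)) y)"
  unfolding simplex_eq_def
proof
  fix y assume y: "y \<in> simplex_interior d"
  define a' where "a' = a(j := a j + 1)"
  have "(\<Sum>l=1..d. real (m l) * ((if l = j then 1 else 0) * X l)) = real (m j) * X j" for X :: "nat \<Rightarrow> real"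
  proof -
    have "(\<Sum>l=1..d. real (m l) * ((if l = j then 1 else 0) * X l)) = (\<Sum>l=1..d. if l = j then real (m j) * X j else 0)"
      by (rule sum.cong) auto
    then show ?thesis using j by simp
  qed
  then have "mpartial d m (\<lambda>y. y j * jacobi_weight d a b y) y
      = y j * mpartial d m (jacobi_weight d a b) y + real (m j) * mpartial d (dec_idx m j) (jacobi_weight d a b) y"
    using mpartial_mult_affine[OF admissible_jacobi_weight admissible_coord[OF j], of "\<lambda>l. if l = j then 1 else 0" m a b] y
    by (simp add: partial_coord simplex_eq_def)
  moreover have "mpartial d m (\<lambda>y. y j * jacobi_weight d a b y) y = mpartial d m (jacobi_weight d a' b) y"
    using mpartial_simplex_eq[OF jacobi_weight_coord[OF j, of a b], of m] y unfolding a'_def simplex_eq_def by blast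
  moreover have "(a j + 1) * mpartial d (dec_idx m j) (jacobi_weight d a b) y
      = mpartial d m (jacobi_weight d a' b) y + b * mpartial d (dec_idx m j) (jacobi_weight d a' (b - 1)) y"
    using mpartial_jacobi_weight_dec_idx[of j d m a' b, OF j mj] y unfolding simplex_eq_def a'_def by simp
  \<comment> \<open>the two terms \<open>\<partial>^(m - e_j) w\<close> cancel because \<open>a j + 1 = m j\<close>\<close>
  ultimately show "y j * mpartial d m (jacobi_weight d a b) y
      = - b * mpartial d (dec_idx m j) (jacobi_weight d (a(j := a j + 1)) (b - 1)) y"
    using aj unfolding a'_def by (simp add: algebra_simps)
qed

lemma coords_prod_mult_mpartial_jacobi_weight:
  assumes "finite K" "K \<subseteq> {1..d}" "\<And>j. j \<in> K \<Longrightarrow> 1 \<le> m j \<and> a j = real (m j) - 1"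
  shows "simplex_eq d (\<lambda>y. (\<Prod>j\<in>K. y j) * mpartial d m (jacobi_weight d a b) y)
    (\<lambda>y. pochhammer (- b) (card K) * mpartial d (\<lambda>l. if l \<in> K then m l - 1 else m l)
       (jacobi_weight d (\<lambda>l. if l \<in> K then a l + 1 else a l) (b - real (card K))) y)"
  using assms
proof (induction K arbitrary: m a b rule: finite_induct)
  case (insert j K)
  then have j: "j \<in> {1..d}" and mj: "1 \<le> m j" and aj: "a j = real (m j) - 1" by auto
  define m' where "m' = dec_idx m j"
  define a' where "a' = a(j := a j + 1)"
  have IH: "simplex_eq d (\<lambda>y. (\<Prod>j\<in>K. y j) * mpartial d m' (jacobi_weight d a' (b - 1)) y)
      (\<lambda>y. pochhammer (- (b - 1)) (card K) * mpartial d (\<lambda>l. if l \<in> K then m' l - 1 else m' l)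
         (jacobi_weight d (\<lambda>l. if l \<in> K then a' l + 1 else a' l) (b - 1 - real (card K))) y)"
    using insert by (intro insert.IH) (auto simp: m'_def a'_def dec_idx_def)
  have idx: "(\<lambda>l. if l \<in> K then m' l - 1 else m' l) = (\<lambda>l. if l \<in> insert j K then m l - 1 else m l)"
    and exps: "(\<lambda>l. if l \<in> K then a' l + 1 else a' l) = (\<lambda>l. if l \<in> insert j K then a l + 1 else a l)"
    using insert.hyps(2) by (auto simp: m'_def a'_def dec_idx_def)
  show ?case
    unfolding simplex_eq_def
  proof
    fix y assume y: "y \<in> simplex_interior d"
    have "(\<Prod>j\<in>insert j K. y j) * mpartial d m (jacobi_weight d a b) y
        = (\<Prod>j\<in>K. y j) * (y j * mpartial d m (jacobi_weight d a b) y)"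
      using insert.hyps by simp
    also have "\<dots> = - b * ((\<Prod>j\<in>K. y j) * mpartial d m' (jacobi_weight d a' (b - 1)) y)"
      using coord_mult_mpartial_jacobi_weight[of j d m a b, OF j mj aj] y
      unfolding simplex_eq_def m'_def a'_def by simp
    also have "\<dots> = pochhammer (- b) (card (insert j K)) *
        mpartial d (\<lambda>l. if l \<in> insert j K then m l - 1 else m l)
          (jacobi_weight d (\<lambda>l. if l \<in> insert j K then a l + 1 else a l) (b - real (card (insert j K)))) y"
      using IH y insert.hyps unfolding simplex_eq_def idx exps
      by (simp add: pochhammer_rec algebra_simps)
    finally show "(\<Prod>j\<in>insert j K. y j) * mpartial d m (jacobi_weight d a b) y = \<dots>" .
  qed
qed simp

lemma P_cong_idx:
  assumes m: "\<And>j. j \<in> {1..d} \<Longrightarrow> m j = m' j"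
  shows "P d g m = P d g m'"
proof
  fix x
  have "abs_idx d m = abs_idx d m'" using m by (simp add: abs_idx_def)
  moreover have "jacobi_weight d (\<lambda>i. g i + real (m i)) q = jacobi_weight d (\<lambda>i. g i + real (m' i)) q" for q
    by (rule jacobi_weight_cong) (simp add: m)
  ultimately show "P d g m x = P d g m' x"
    by (simp only: P_eq_mpartial_jacobi_weight mpartial_cong_idx[of d m m', OF m])
qed

lemma P_dec_idx:
  assumes i: "i \<in> {1..d}" and mi: "1 \<le> m i"
  shows "P d g (dec_idx m i) x = (\<Prod>l=1..d. x l powr (- g l)) * (1 - abs_pt d x) powr (- g (d+1)) *
    mpartial d (dec_idx m i) (jacobi_weight d ((\<lambda>l. g l + real (m l))(i := g i + real (m i) - 1))
      (g (d+1) + real (abs_idx d m) - 1)) x"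
proof -
  have "(\<lambda>l. g l + real (dec_idx m i l)) = (\<lambda>l. g l + real (m l))(i := g i + real (m i) - 1)"
    using mi by (auto simp: dec_idx_def of_nat_diff)
  moreover have "g (d+1) + real (abs_idx d (dec_idx m i)) = g (d+1) + real (abs_idx d m) - 1"
    using abs_idx_dec_idx[of i d m, OF i mi] by simp
  ultimately show ?thesis
    by (simp only: P_eq_mpartial_jacobi_weight)
qed

lemma P_coords_minus_one:
  assumes K: "K \<subseteq> {1..d}" and gK: "\<And>j. j \<in> K \<Longrightarrow> g j = -1" and nK: "\<And>j. j \<in> K \<Longrightarrow> 1 \<le> n j"
    and g': "\<And>i. i \<in> {1..d} \<Longrightarrow> g' i = (if i \<in> K then 1 else g i)"
    and x: "x \<in> simplex_interior d"
  defines "m \<equiv> \<lambda>i. if i \<in> K then n i - 1 else n i"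
  shows "P d g n x = (\<Prod>j\<in>K. x j) * (\<Prod>i=1..d. x i powr (- g' i)) * (1 - abs_pt d x) powr (- g (d+1)) *
    pochhammer (- (g (d+1) + real (abs_idx d n))) (card K) *
    mpartial d m (jacobi_weight d (\<lambda>i. g' i + real (m i)) (g (d+1) + real (abs_idx d n) - real (card K))) x"
proof -
  have finK: "finite K" using K finite_subset by blast
  have "x i powr (- g i) = x i powr (- g' i) * (if i \<in> K then x i * x i else 1)" if i: "i \<in> {1..d}" for i
    using simplex_interior_coord_pos[OF x i] gK g'[OF i] by (simp add: powr_minus field_simps)
  then have "(\<Prod>i=1..d. x i powr (- g i)) = (\<Prod>i=1..d. x i powr (- g' i) * (if i \<in> K then x i * x i else 1))"
    by (rule prod.cong[OF refl])
  also have "\<dots> = (\<Prod>i=1..d. x i powr (- g' i)) * ((\<Prod>j\<in>K. x j) * (\<Prod>j\<in>K. x j))"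
    using K by (simp add: prod.distrib prod.If_cases Int_absorb1)
  finally have prod_powr: "(\<Prod>i=1..d. x i powr (- g i)) = \<dots>" .
  have coords: "(\<Prod>j\<in>K. x j) * mpartial d n (jacobi_weight d (\<lambda>i. g i + real (n i)) q) x
      = pochhammer (- q) (card K) * mpartial d m (jacobi_weight d (\<lambda>i. g' i + real (m i)) (q - real (card K))) x" for q
  proof -
    have "jacobi_weight d (\<lambda>l. if l \<in> K then g l + real (n l) + 1 else g l + real (n l)) (q - real (card K))
        = jacobi_weight d (\<lambda>i. g' i + real (m i)) (q - real (card K))"
      using gK nK g' by (intro jacobi_weight_cong) (auto simp: m_def of_nat_diff)
    then show ?thesis
      using coords_prod_mult_mpartial_jacobi_weight[OF finK K, of n "\<lambda>i. g i + real (n i)" q] gK nK x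
      unfolding simplex_eq_def m_def by auto
  qed
  have "P d g n x = (\<Prod>i=1..d. x i powr (- g' i)) * (\<Prod>j\<in>K. x j) * (1 - abs_pt d x) powr (- g (d+1)) *
      ((\<Prod>j\<in>K. x j) * mpartial d n (jacobi_weight d (\<lambda>i. g i + real (n i)) (g (d+1) + real (abs_idx d n))) x)"
    unfolding P_eq_mpartial_jacobi_weight prod_powr by (simp only: ac_simps)
  then show ?thesis
    unfolding coords by (simp only: ac_simps)
qed

text \<open>Stated for any \<open>c\<close> with \<open>c |m| = pochhammer (1 - |n|) |K|\<close>, which avoids dividing by \<open>|m|\<close>;
  for \<open>|m| = 0\<close> both sides vanish.\<close>
lemma P_expansion_minus_one:
  assumes K: "K \<subseteq> {1..d}" and gK: "\<And>j. j \<in> insert (d+1) K \<Longrightarrow> g j = -1"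
    and nK: "\<And>j. j \<in> K \<Longrightarrow> 1 \<le> n j"
    and g': "\<And>i. i \<in> {1..d} \<Longrightarrow> g' i = (if i \<in> K then 1 else g i)" "g' (d+1) = 1"
    and x: "x \<in> simplex_interior d"
  defines "m \<equiv> \<lambda>i. if i \<in> K then n i - 1 else n i"
  assumes c: "c * real (abs_idx d m) = pochhammer (1 - real (abs_idx d n)) (card K)"
  shows "P d g n x = (\<Prod>j\<in>K. x j) * (1 - abs_pt d x) *
    (\<Sum>i=1..d. c * real (m i) * (g' i + real (m i)) * P d g' (dec_idx m i) x)"
proof -
  define M where "M = real (abs_idx d m)"
  define W where "W = jacobi_weight d (\<lambda>i. g' i + real (m i))"
  define B where "B = (\<Prod>i=1..d. x i powr (- g' i))"
  define s where "s = 1 - abs_pt d x"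
  have s: "0 < s" unfolding s_def by (rule simplex_interior_slack_pos[OF x])
  have B: "0 < B" unfolding B_def using simplex_interior_coord_pos[OF x] by (force intro!: prod_pos)
  have M: "M = real (abs_idx d n) - real (card K)"
    unfolding M_def m_def by (rule abs_idx_dec_on_set[OF K nK])
  have "P d g n x = (\<Prod>j\<in>K. x j) * B * s * pochhammer (1 - real (abs_idx d n)) (card K) *
      mpartial d m (W (M - 1)) x"
    using P_coords_minus_one[of K d g n g' x, OF K gK nK g'(1) x] gK[of "d+1"] s
    unfolding B_def[symmetric] s_def[symmetric] M
    by (simp add: W_def m_def algebra_simps)
  also have "\<dots> = (\<Prod>j\<in>K. x j) * B * c * (M * (s * mpartial d m (W (M - 1)) x))"
    unfolding c[folded M_def, symmetric] by (simp only: ac_simps)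
  also have "M * (s * mpartial d m (W (M - 1)) x) = (\<Sum>i=1..d. real (m i) * (g' i + real (m i)) *
      mpartial d (dec_idx m i) (jacobi_weight d ((\<lambda>l. g' l + real (m l))(i := g' i + real (m i) - 1)) M) x)"
    using slack_mult_mpartial_jacobi_weight[of d m "\<lambda>i. g' i + real (m i)"] x
    unfolding simplex_eq_def W_def M_def s_def by simp
  also have "\<dots> = s / B * (\<Sum>i=1..d. real (m i) * (g' i + real (m i)) * P d g' (dec_idx m i) x)"
  proof -
    have "(1 - abs_pt d x) powr (- 1) = 1 / s" using s by (simp add: s_def powr_minus divide_inverse)
    then have "real (m i) * (g' i + real (m i)) *
        mpartial d (dec_idx m i) (jacobi_weight d ((\<lambda>l. g' l + real (m l))(i := g' i + real (m i) - 1)) M) x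
      = s / B * (real (m i) * (g' i + real (m i)) * P d g' (dec_idx m i) x)" if "i \<in> {1..d}" for i
      using P_dec_idx[of i d m g' x] that g'(2) s B unfolding B_def[symmetric] M_def[symmetric]
      by (cases "m i = 0") (auto simp: field_simps)
    then show ?thesis by (simp add: sum_distrib_left)
  qed
  also have "(\<Prod>j\<in>K. x j) * B * c * (s / B * S) = (\<Prod>j\<in>K. x j) * s * (c * S)" for S
    using B by (simp add: field_simps)
  finally show ?thesis
    by (simp add: s_def sum_distrib_left mult.assoc)
qed

lemma pochhammer_one_minus:
  fixes N :: real
  shows "(-1) ^ k * (\<Prod>j<k. N - real j) * (N - real k) = N * pochhammer (1 - N) k"
proof (induction k)
  case (Suc k)
  have "(-1) ^ Suc k * (\<Prod>j<Suc k. N - real j) * (N - real (Suc k))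
      = - ((-1) ^ k * (\<Prod>j<k. N - real j) * (N - real k)) * (N - real (Suc k))"
    by (simp add: algebra_simps)
  also have "\<dots> = N * pochhammer (1 - N) (Suc k)"
    unfolding Suc.IH by (simp add: pochhammer_Suc algebra_simps)
  finally show ?case .
qed simp

lemma lam_eq_mult: "lam d k n ni g = real ni * (real ni + g) * lam d k n 1 0"
  by (simp add: lam_def)

lemma lam_one_zero_mult_eq_pochhammer:
  assumes "abs_idx d n \<noteq> 0"
  shows "lam d k n 1 0 * (real (abs_idx d n) - real (k - 1)) = pochhammer (1 - real (abs_idx d n)) (k - 1)"
  using pochhammer_one_minus[of "k - 1" "real (abs_idx d n)"] assms
  by (simp add: lam_def atLeast0LessThan field_simps)

lemma rhs_term_eq:
  assumes k: "1 \<le> k" "k \<le> d" and n: "\<forall>j\<in>{d+2-k..d}. 1 \<le> n j" and i: "i \<in> {1..d}"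
  defines "m \<equiv> \<lambda>l. if l \<in> {d+2-k..d} then n l - 1 else n l"
  shows "rhs_term d k \<gamma> n x i =
    lam d k n 1 0 * real (m i) * (ext_param d k \<gamma> 1 i + real (m i)) * P d (ext_param d k \<gamma> 1) (dec_idx m i) x"
proof -
  have shifted: "shifted_idx d k n i j = int (m j) - (if j = i then 1 else 0)" if "j \<in> {1..d}" for j
    using n that by (auto simp: shifted_idx_def m_def of_nat_diff)
  show ?thesis
  proof (cases "m i = 0")
    case True
    then have negative: "\<not> (\<forall>j\<in>{1..d}. 0 \<le> shifted_idx d k n i j)" using shifted[OF i] i by fastforce
    show ?thesis unfolding rhs_term_def if_not_P[OF negative] using True by simp
  next
    case False
    then have "\<forall>j\<in>{1..d}. 0 \<le> shifted_idx d k n i j" using shifted by auto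
    moreover have "P d (ext_param d k \<gamma> 1) (\<lambda>j. nat (shifted_idx d k n i j)) = P d (ext_param d k \<gamma> 1) (dec_idx m i)"
      using shifted False by (intro P_cong_idx) (auto simp: dec_idx_def)
    moreover have "real (n i) * (real (n i) + ext_param d k \<gamma> (-1) i) = real (m i) * (ext_param d k \<gamma> 1 i + real (m i))"
      using n i k by (cases "d + 2 - k \<le> i") (auto simp: m_def ext_param_def of_nat_diff algebra_simps)
    ultimately show ?thesis
      by (simp add: rhs_term_def lam_eq_mult[of d k n "n i"] ac_simps)
  qed
qed

theorem corollary4p4:
  fixes d k :: nat and \<gamma> :: "nat \<Rightarrow> real" and n :: "nat \<Rightarrow> nat" and x :: "nat \<Rightarrow> real"
  assumes "1 \<le> k" and "k \<le> d"
    and "\<forall>j\<in>{d+2-k..d}. 1 \<le> n j"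
    and "abs_idx d n \<noteq> 0"
    and "x \<in> simplex_interior d"
  shows "P d (ext_param d k \<gamma> (-1)) n x =
         (\<Prod>j=d+2-k..d. x j) * (1 - abs_pt d x) * (\<Sum>i=1..d. rhs_term d k \<gamma> n x i)"
proof -
  define K where "K = {d+2-k..d}"
  define m where "m = (\<lambda>l. if l \<in> K then n l - 1 else n l)"
  have K: "K \<subseteq> {1..d}" "card K = k - 1" using assms(1,2) by (auto simp: K_def)
  have nK: "1 \<le> n j" if "j \<in> K" for j using that assms(3) by (simp add: K_def)
  have "real (abs_idx d m) = real (abs_idx d n) - real (k - 1)"
    using abs_idx_dec_on_set[OF K(1) nK] K(2) by (simp add: m_def)
  then have "P d (ext_param d k \<gamma> (-1)) n x = (\<Prod>j\<in>K. x j) * (1 - abs_pt d x) * (\<Sum>i=1..d.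
      lam d k n 1 0 * real (m i) * (ext_param d k \<gamma> 1 i + real (m i)) * P d (ext_param d k \<gamma> 1) (dec_idx m i) x)"
    unfolding m_def using assms(1,2,5) lam_one_zero_mult_eq_pochhammer[OF assms(4), of k] K nK
    by (intro P_expansion_minus_one) (auto simp: ext_param_def K_def)
  also have "(\<Sum>i=1..d. lam d k n 1 0 * real (m i) * (ext_param d k \<gamma> 1 i + real (m i)) *
      P d (ext_param d k \<gamma> 1) (dec_idx m i) x) = (\<Sum>i=1..d. rhs_term d k \<gamma> n x i)"
    using rhs_term_eq[OF assms(1-3)] by (simp add: m_def K_def)
  finally show ?thesis unfolding K_def .
qed

end
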